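(* Let $n\ge 4$ and let $T$ be a vertex of the Whitehouse complex $\Delta_n$. Then $\mathrm{link}_{\Delta_n}(\{T\})\cong \Delta_{|T|+1} * \Delta_{n-|T|+1}$ as simplicial complexes.
   Context: The Whitehouse complex $\Delta_n$ ($n\ge 3$) is the simplicial complex with vertex set $V_n=\{S\subseteq\{2,\dots,n\}: 2\le |S|\le n-2\}$, in which a subset $F\subseteq V_n$ is a face iff for all $S,T\in F$ one has $S\subseteq T$, $T\subseteq S$, or $S\cap T=\emptyset$. (So $\Delta_3=\{\emptyset\}$.) The link of a face $F$ in $\Delta$ is $\{G: F\cap G=\emptyset, F\cup G\in\Delta\}$. For complexes $\Delta,\Gamma$ on disjoint vertex sets, the join is $\Delta*\Gamma=\{F\cup G: F\in\Delta, G\in\Gamma\}$ (taking disjoint copies of vertex sets when needed). *)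

theory Defs
  imports Main
begin

text \<open>Simplicial complexes are represented by their set of faces (a set of finite sets).\<close>

definition wh_vertices :: "nat \<Rightarrow> nat set set" where
  "wh_vertices n = {S. S \<subseteq> {2..n} \<and> 2 \<le> card S \<and> card S \<le> n - 2}"

definition whitehouse :: "nat \<Rightarrow> nat set set set" where
  "whitehouse n = {F. F \<subseteq> wh_vertices n \<and>
      (\<forall>S\<in>F. \<forall>T\<in>F. S \<subseteq> T \<or> T \<subseteq> S \<or> S \<inter> T = {})}"

definition link :: "'a set set \<Rightarrow> 'a set \<Rightarrow> 'a set set" where
  "link \<Delta> F = {G. F \<inter> G = {} \<and> F \<union> G \<in> \<Delta>}"

definition join :: "'a set set \<Rightarrow> 'b set set \<Rightarrow> ('a + 'b) set set" where
  "join \<Delta> \<Gamma> = {Inl ` F \<union> Inr ` G | F G. F \<in> \<Delta> \<and> G \<in> \<Gamma>}"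

definition simplicial_iso :: "'a set set \<Rightarrow> 'b set set \<Rightarrow> bool" where
  "simplicial_iso \<Delta> \<Gamma> \<longleftrightarrow> (\<exists>f. inj_on f (\<Union>\<Delta>) \<and> (\<lambda>F. f ` F) ` \<Delta> = \<Gamma>)"

end

(*
  Delta_n only depends on its ground set {2..n}: its vertices are the proper subsets with at
  least two elements, and its faces are the laminar families of such sets. A face of the link
  of T is a laminar family of vertices S \<noteq> T compatible with T, so each of its members lies
  strictly inside T or is an outer vertex, one that properly contains T or is disjoint from it.
  Inner and outer vertices are always compatible, so the link is the join of the laminar
  families of inner vertices, i.e. the Whitehouse complex on the ground set T, and those of
  outer vertices. Contracting T to one of its points t maps the outer vertices bijectively and
  compatibly onto the vertices of the Whitehouse complex on ({2..n} - T) + t, a ground set of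
  n - |T| elements. Ground sets of equal size give isomorphic complexes.
*)
theory Submission
  imports Defs
begin

definition compatible :: "'a set \<Rightarrow> 'a set \<Rightarrow> bool" where
  "compatible S T \<longleftrightarrow> S \<subseteq> T \<or> T \<subseteq> S \<or> S \<inter> T = {}"

definition laminar_families :: "'a set set \<Rightarrow> 'a set set set" where
  "laminar_families V = {F. F \<subseteq> V \<and> (\<forall>S\<in>F. \<forall>T\<in>F. compatible S T)}"

lemma compatible_commute: "compatible S T \<longleftrightarrow> compatible T S"
  unfolding compatible_def by blast

lemma compatible_refl [simp]: "compatible S S"
  unfolding compatible_def by blast

lemma compatible_image_iff:
  assumes "inj_on f X" and "S \<subseteq> X" and "T \<subseteq> X"
  shows "compatible (f ` S) (f ` T) \<longleftrightarrow> compatible S T"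
proof -
  have subset_iff: "f ` A \<subseteq> f ` B \<longleftrightarrow> A \<subseteq> B" if "A \<subseteq> X" "B \<subseteq> X" for A B
  proof -
    have "f ` A \<subseteq> f ` B \<longleftrightarrow> f ` (A \<inter> B) = f ` A"
      by (simp add: inj_on_image_Int[OF assms(1) that] Int_absorb2 le_iff_inf)
    also have "\<dots> \<longleftrightarrow> A \<inter> B = A"
      using that by (intro inj_on_image_eq_iff[OF assms(1)]) auto
    finally show ?thesis
      by (simp add: le_iff_inf)
  qed
  have "f ` S \<inter> f ` T = {} \<longleftrightarrow> S \<inter> T = {}"
    by (simp flip: inj_on_image_Int[OF assms])
  then show ?thesis
    unfolding compatible_def using subset_iff[of S T] subset_iff[of T S] assms(2,3) by simp
qed

lemma Union_laminar_families [simp]: "\<Union> (laminar_families V) = V"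
proof
  show "V \<subseteq> \<Union> (laminar_families V)"
  proof
    fix S assume "S \<in> V"
    then have "{S} \<in> laminar_families V"
      by (simp add: laminar_families_def compatible_def)
    then show "S \<in> \<Union> (laminar_families V)"
      by blast
  qed
qed (auto simp: laminar_families_def)

lemma simplicial_iso_refl: "simplicial_iso \<Delta> \<Delta>"
  unfolding simplicial_iso_def by (rule exI[of _ id]) simp

lemma simplicial_iso_trans:
  assumes "simplicial_iso \<Delta> \<Gamma>" and "simplicial_iso \<Gamma> \<Sigma>"
  shows "simplicial_iso \<Delta> \<Sigma>"
proof -
  obtain f where f: "inj_on f (\<Union>\<Delta>)" "(\<lambda>F. f ` F) ` \<Delta> = \<Gamma>"
    using assms(1) unfolding simplicial_iso_def by blast
  obtain g where g: "inj_on g (\<Union>\<Gamma>)" "(\<lambda>G. g ` G) ` \<Gamma> = \<Sigma>"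
    using assms(2) unfolding simplicial_iso_def by blast
  have "\<Union>\<Gamma> = f ` \<Union>\<Delta>"
    using f(2) by blast
  then have "inj_on (g \<circ> f) (\<Union>\<Delta>)"
    using f(1) g(1) by (simp add: comp_inj_on)
  moreover have "(\<lambda>F. (g \<circ> f) ` F) ` \<Delta> = \<Sigma>"
    using f(2) g(2) by (auto simp: image_comp [symmetric] image_image)
  ultimately show ?thesis
    unfolding simplicial_iso_def by blast
qed

lemma simplicial_iso_join:
  assumes "simplicial_iso \<Delta> \<Delta>'" and "simplicial_iso \<Gamma> \<Gamma>'"
  shows "simplicial_iso (join \<Delta> \<Gamma>) (join \<Delta>' \<Gamma>')"
proof -
  obtain f where f: "inj_on f (\<Union>\<Delta>)" "(\<lambda>F. f ` F) ` \<Delta> = \<Delta>'"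
    using assms(1) unfolding simplicial_iso_def by blast
  obtain g where g: "inj_on g (\<Union>\<Gamma>)" "(\<lambda>G. g ` G) ` \<Gamma> = \<Gamma>'"
    using assms(2) unfolding simplicial_iso_def by blast
  have "inj_on (map_sum f g) (Inl ` \<Union>\<Delta> \<union> Inr ` \<Union>\<Gamma>)"
    using f(1) g(1) by (auto simp: inj_on_def)
  moreover have "\<Union> (join \<Delta> \<Gamma>) \<subseteq> Inl ` \<Union>\<Delta> \<union> Inr ` \<Union>\<Gamma>"
    unfolding join_def by blast
  ultimately have "inj_on (map_sum f g) (\<Union> (join \<Delta> \<Gamma>))"
    by (rule inj_on_subset)
  moreover have "(\<lambda>H. map_sum f g ` H) ` join \<Delta> \<Gamma> = join \<Delta>' \<Gamma>'"
  proof -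
    have image_join_face: "map_sum f g ` (Inl ` F \<union> Inr ` G) = Inl ` (f ` F) \<union> Inr ` (g ` G)" for F G
      by (simp add: image_Un image_image)
    show ?thesis
    proof (intro equalityI subsetI)
      fix H assume "H \<in> (\<lambda>H. map_sum f g ` H) ` join \<Delta> \<Gamma>"
      then obtain F G where "F \<in> \<Delta>" "G \<in> \<Gamma>" "H = map_sum f g ` (Inl ` F \<union> Inr ` G)"
        unfolding join_def by blast
      then show "H \<in> join \<Delta>' \<Gamma>'"
        unfolding join_def f(2) [symmetric] g(2) [symmetric] image_join_face by blast
    next
      fix H assume "H \<in> join \<Delta>' \<Gamma>'"
      then obtain F G where "F \<in> \<Delta>" "G \<in> \<Gamma>" "H = Inl ` (f ` F) \<union> Inr ` (g ` G)"
        unfolding join_def f(2) [symmetric] g(2) [symmetric] by blast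
      then have "H = map_sum f g ` (Inl ` F \<union> Inr ` G)"
        by (simp only: image_join_face)
      then show "H \<in> (\<lambda>H. map_sum f g ` H) ` join \<Delta> \<Gamma>"
        unfolding join_def using \<open>F \<in> \<Delta>\<close> \<open>G \<in> \<Gamma>\<close> by blast
    qed
  qed
  ultimately show ?thesis
    unfolding simplicial_iso_def by blast
qed

lemma simplicial_iso_laminar_families:
  assumes h: "bij_betw h V W"
    and compatible_h: "\<And>S T. S \<in> V \<Longrightarrow> T \<in> V \<Longrightarrow> compatible (h S) (h T) \<longleftrightarrow> compatible S T"
  shows "simplicial_iso (laminar_families V) (laminar_families W)"
  unfolding simplicial_iso_def
proof (intro exI conjI)
  have inj: "inj_on h V" and W: "W = h ` V"
    using h by (auto simp: bij_betw_def)
  show "inj_on h (\<Union> (laminar_families V))"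
    using inj by simp
  have image_laminar: "h ` F \<in> laminar_families W \<longleftrightarrow> F \<in> laminar_families V" if "F \<subseteq> V" for F
  proof -
    have "(\<forall>U\<in>h ` F. \<forall>U'\<in>h ` F. compatible U U') \<longleftrightarrow> (\<forall>S\<in>F. \<forall>S'\<in>F. compatible S S')"
      using that compatible_h by (auto simp: subset_iff)
    then show ?thesis
      using that unfolding laminar_families_def W by blast
  qed
  show "(\<lambda>F. h ` F) ` laminar_families V = laminar_families W"
  proof (intro equalityI subsetI)
    fix G assume "G \<in> (\<lambda>F. h ` F) ` laminar_families V"
    then obtain F where "F \<in> laminar_families V" and "G = h ` F"
      by blast
    then show "G \<in> laminar_families W"
      using image_laminar by (simp add: laminar_families_def)
  next
    fix G assume G: "G \<in> laminar_families W"
    then have "G \<subseteq> h ` V"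
      by (simp add: laminar_families_def W)
    then obtain F where "F \<subseteq> V" and "G = h ` F"
      by (auto simp: subset_image_iff)
    then show "G \<in> (\<lambda>F. h ` F) ` laminar_families V"
      using G image_laminar by blast
  qed
qed

lemma link_laminar_families:
  assumes "T \<in> V"
  shows "link (laminar_families V) {T} = laminar_families {S \<in> V. S \<noteq> T \<and> compatible S T}"
proof -
  have "insert T G \<in> laminar_families V \<longleftrightarrow>
      G \<subseteq> V \<and> (\<forall>S\<in>G. compatible S T) \<and> (\<forall>S\<in>G. \<forall>S'\<in>G. compatible S S')" for G
    using assms compatible_commute unfolding laminar_families_def by auto
  then show ?thesis
    unfolding link_def laminar_families_def by auto
qed

lemma laminar_families_Un_iff:
  assumes compatible_AB: "\<And>S T. S \<in> A \<Longrightarrow> T \<in> B \<Longrightarrow> compatible S T" and "F \<subseteq> A \<union> B"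
  shows "F \<in> laminar_families (A \<union> B) \<longleftrightarrow>
    F \<inter> A \<in> laminar_families A \<and> F \<inter> B \<in> laminar_families B"
proof
  assume "F \<in> laminar_families (A \<union> B)"
  then show "F \<inter> A \<in> laminar_families A \<and> F \<inter> B \<in> laminar_families B"
    unfolding laminar_families_def by auto
next
  assume laminar_parts: "F \<inter> A \<in> laminar_families A \<and> F \<inter> B \<in> laminar_families B"
  have "compatible S S'" if in_F: "S \<in> F" "S' \<in> F" for S S'
  proof -
    consider "S \<in> A" "S' \<in> A" | "S \<in> B" "S' \<in> B" | "S \<in> A" "S' \<in> B" | "S \<in> B" "S' \<in> A"
      using in_F \<open>F \<subseteq> A \<union> B\<close> by blast
    then show ?thesis
      using in_F laminar_parts compatible_AB compatible_commute
      unfolding laminar_families_def by cases blast+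
  qed
  then show "F \<in> laminar_families (A \<union> B)"
    using \<open>F \<subseteq> A \<union> B\<close> unfolding laminar_families_def by blast
qed

lemma laminar_families_Un_iso_join:
  assumes disjoint: "A \<inter> B = {}"
    and compatible_AB: "\<And>S T. S \<in> A \<Longrightarrow> T \<in> B \<Longrightarrow> compatible S T"
  shows "simplicial_iso (laminar_families (A \<union> B)) (join (laminar_families A) (laminar_families B))"
proof -
  define f where "f S = (if S \<in> A then Inl S else Inr S)" for S
  have image_f: "f ` F = Inl ` (F \<inter> A) \<union> Inr ` (F \<inter> B)" if "F \<subseteq> A \<union> B" for F
    using that disjoint by (auto simp: f_def)
  note laminar_iff = laminar_families_Un_iff[OF compatible_AB]
  have "inj_on f (A \<union> B)"
    using disjoint by (auto simp: inj_on_def f_def)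
  moreover have "(\<lambda>F. f ` F) ` laminar_families (A \<union> B) = join (laminar_families A) (laminar_families B)"
  proof (intro equalityI subsetI)
    fix H assume "H \<in> (\<lambda>F. f ` F) ` laminar_families (A \<union> B)"
    then obtain F where F: "F \<in> laminar_families (A \<union> B)" and H: "H = f ` F"
      by blast
    then have "F \<subseteq> A \<union> B"
      by (simp add: laminar_families_def)
    then have "F \<inter> A \<in> laminar_families A" "F \<inter> B \<in> laminar_families B"
      using F laminar_iff by simp_all
    then show "H \<in> join (laminar_families A) (laminar_families B)"
      unfolding join_def H image_f[OF \<open>F \<subseteq> A \<union> B\<close>] by blast
  next
    fix H assume "H \<in> join (laminar_families A) (laminar_families B)"
    then obtain FA FB where FA: "FA \<in> laminar_families A" and FB: "FB \<in> laminar_families B"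
      and H: "H = Inl ` FA \<union> Inr ` FB"
      unfolding join_def by blast
    have "FA \<subseteq> A" "FB \<subseteq> B"
      using FA FB by (simp_all add: laminar_families_def)
    then have parts: "(FA \<union> FB) \<inter> A = FA" "(FA \<union> FB) \<inter> B = FB" and sub: "FA \<union> FB \<subseteq> A \<union> B"
      using disjoint by blast+
    then have "FA \<union> FB \<in> laminar_families (A \<union> B)"
      using FA FB laminar_iff by simp
    moreover have "H = f ` (FA \<union> FB)"
      unfolding H image_f[OF sub] parts ..
    ultimately show "H \<in> (\<lambda>F. f ` F) ` laminar_families (A \<union> B)"
      by blast
  qed
  ultimately show ?thesis
    unfolding simplicial_iso_def by auto
qed

definition wh_vertices_on :: "'a set \<Rightarrow> 'a set set" where
  "wh_vertices_on X = {S. S \<subset> X \<and> 2 \<le> card S}"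

definition whitehouse_on :: "'a set \<Rightarrow> 'a set set set" where
  "whitehouse_on X = laminar_families (wh_vertices_on X)"

lemma wh_vertices_eq_wh_vertices_on: "wh_vertices n = wh_vertices_on {2..n}"
proof -
  have "S \<subseteq> {2..n} \<and> card S \<le> n - 2 \<longleftrightarrow> S \<subset> {2..n}" if "2 \<le> card S" for S :: "nat set"
  proof
    assume "S \<subseteq> {2..n} \<and> card S \<le> n - 2"
    then show "S \<subset> {2..n}"
      using that by auto
  next
    assume "S \<subset> {2..n}"
    then have "card S < n - 1"
      using psubset_card_mono[of "{2..n}" S] by simp
    then show "S \<subseteq> {2..n} \<and> card S \<le> n - 2"
      using \<open>S \<subset> {2..n}\<close> by auto
  qed
  then show ?thesis
    unfolding wh_vertices_def wh_vertices_on_def by blast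
qed

lemma whitehouse_eq_whitehouse_on: "whitehouse n = whitehouse_on {2..n}"
  unfolding whitehouse_def whitehouse_on_def laminar_families_def compatible_def
    wh_vertices_eq_wh_vertices_on ..

lemma wh_vertices_on_eq: "wh_vertices_on X = {S \<in> Pow X. S \<noteq> X \<and> 2 \<le> card S}"
  by (auto simp: wh_vertices_on_def)

lemma whitehouse_on_iso:
  assumes "finite X" and "finite Y" and "card X = card Y"
  shows "simplicial_iso (whitehouse_on X) (whitehouse_on Y)"
proof -
  obtain f where f: "bij_betw f X Y"
    using finite_same_card_bij assms by blast
  then have inj: "inj_on f X" and Y: "Y = f ` X"
    by (auto simp: bij_betw_def)
  have "f ` S \<noteq> Y \<and> 2 \<le> card (f ` S) \<longleftrightarrow> S \<noteq> X \<and> 2 \<le> card S" if "S \<in> Pow X" for S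
  proof -
    have "S \<subseteq> X"
      using that by simp
    then have "f ` S = Y \<longleftrightarrow> S = X" and "card (f ` S) = card S"
      unfolding Y using inj_on_image_eq_iff[OF inj] card_image[OF inj_on_subset[OF inj]] by auto
    then show ?thesis
      by simp
  qed
  with bij_betw_Pow[OF f] have "bij_betw (image f) (wh_vertices_on X) (wh_vertices_on Y)"
    unfolding wh_vertices_on_eq by (rule bij_betw_Collect)
  then show ?thesis
    unfolding whitehouse_on_def
  proof (rule simplicial_iso_laminar_families)
    show "compatible (f ` S) (f ` S') \<longleftrightarrow> compatible S S'"
      if "S \<in> wh_vertices_on X" "S' \<in> wh_vertices_on X" for S S'
      using that compatible_image_iff[OF inj] by (simp add: wh_vertices_on_eq)
  qed
qed

lemma wh_vertices_on_finite: "S \<in> wh_vertices_on X \<Longrightarrow> finite S"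
  using card_ge_0_finite[of S] by (simp add: wh_vertices_on_def)

definition outer_vertices :: "'a set \<Rightarrow> 'a set \<Rightarrow> 'a set set" where
  "outer_vertices X T = {S \<in> wh_vertices_on X. T \<subset> S \<or> S \<inter> T = {}}"

lemma compatible_vertices_split:
  assumes "T \<in> wh_vertices_on X"
  shows "{S \<in> wh_vertices_on X. S \<noteq> T \<and> compatible S T} = wh_vertices_on T \<union> outer_vertices X T"
    and "wh_vertices_on T \<inter> outer_vertices X T = {}"
    and "\<And>S S'. S \<in> wh_vertices_on T \<Longrightarrow> S' \<in> outer_vertices X T \<Longrightarrow> compatible S S'"
proof -
  have "T \<subset> X"
    using assms by (simp add: wh_vertices_on_def)
  have not_inside_and_disjoint: "\<not> (S \<subseteq> T \<and> S \<inter> T = {})" if "2 \<le> card S" for S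
    using that by (auto simp: Int_absorb2)
  have "S \<in> wh_vertices_on X \<and> S \<noteq> T \<and> compatible S T \<longleftrightarrow>
      S \<in> wh_vertices_on T \<or> S \<in> outer_vertices X T" for S
  proof (cases "S \<subseteq> T")
    case True
    then show ?thesis
      using \<open>T \<subset> X\<close> not_inside_and_disjoint[of S]
      unfolding outer_vertices_def wh_vertices_on_def compatible_def by auto
  next
    case False
    then show ?thesis
      unfolding outer_vertices_def wh_vertices_on_def compatible_def by auto
  qed
  then show "{S \<in> wh_vertices_on X. S \<noteq> T \<and> compatible S T} = wh_vertices_on T \<union> outer_vertices X T"
    by (simp add: set_eq_iff)
  have "S \<notin> outer_vertices X T" if "S \<in> wh_vertices_on T" for S
  proof -
    have "S \<subseteq> T" "2 \<le> card S" "\<not> T \<subset> S"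
      using that by (auto simp: wh_vertices_on_def)
    then show ?thesis
      using not_inside_and_disjoint unfolding outer_vertices_def by blast
  qed
  then show "wh_vertices_on T \<inter> outer_vertices X T = {}"
    by blast
  show "compatible S S'" if "S \<in> wh_vertices_on T" and "S' \<in> outer_vertices X T" for S S'
    using that unfolding outer_vertices_def wh_vertices_on_def compatible_def by auto
qed

definition collapse :: "'a set \<Rightarrow> 'a \<Rightarrow> 'a set \<Rightarrow> 'a set" where
  "collapse T t S = (if S \<inter> T = {} then S else insert t (S - T))"

definition uncollapse :: "'a set \<Rightarrow> 'a \<Rightarrow> 'a set \<Rightarrow> 'a set" where
  "uncollapse T t U = (if t \<in> U then T \<union> (U - {t}) else U)"

lemma compatible_collapse_iff:
  assumes "t \<in> T" and "T \<subseteq> S \<or> S \<inter> T = {}" and "T \<subseteq> S' \<or> S' \<inter> T = {}"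
  shows "compatible (collapse T t S) (collapse T t S') \<longleftrightarrow> compatible S S'"
  using assms unfolding collapse_def compatible_def by (cases "S \<inter> T = {}"; cases "S' \<inter> T = {}") auto

lemma collapse_mem_wh_vertices_on:
  assumes "T \<subseteq> X" and "t \<in> T" and S: "S \<in> outer_vertices X T"
  shows "collapse T t S \<in> wh_vertices_on (insert t (X - T))"
proof (cases "S \<inter> T = {}")
  case True
  then show ?thesis
    using S \<open>t \<in> T\<close> by (auto simp: collapse_def outer_vertices_def wh_vertices_on_def)
next
  case False
  then have "T \<subset> S" and S_vertex: "S \<in> wh_vertices_on X"
    using S by (auto simp: outer_vertices_def)
  then have "S \<subset> X" "finite S"
    using wh_vertices_on_finite by (auto simp: wh_vertices_on_def)
  have "S - T \<noteq> {}" "t \<notin> S - T"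
    using \<open>T \<subset> S\<close> \<open>t \<in> T\<close> by auto
  then have "2 \<le> card (insert t (S - T))"
    using \<open>finite S\<close> by (simp add: Suc_le_eq card_gt_0_iff)
  moreover have "insert t (S - T) \<subset> insert t (X - T)"
  proof -
    have "S - T \<subset> X - T"
      using \<open>T \<subset> S\<close> \<open>S \<subset> X\<close> by blast
    then show ?thesis
      using \<open>t \<in> T\<close> by (auto simp: psubset_eq)
  qed
  ultimately show ?thesis
    using False by (simp add: collapse_def wh_vertices_on_def)
qed

lemma uncollapse_mem_outer_vertices:
  assumes "T \<subseteq> X" and "finite T" and "t \<in> T" and U: "U \<in> wh_vertices_on (insert t (X - T))"
  shows "uncollapse T t U \<in> outer_vertices X T"
proof (cases "t \<in> U")
  case True
  have U_sub: "U \<subset> insert t (X - T)" and "2 \<le> card U" and "finite U"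
    using U wh_vertices_on_finite by (auto simp: wh_vertices_on_def)
  then have "card (U - {t}) \<ge> 1"
    using True by simp
  then have "U - {t} \<noteq> {}"
    by (cases "U - {t} = {}") simp_all
  have "U - {t} \<subset> X - T"
    using U_sub True by auto
  then have "T \<union> (U - {t}) \<subset> X"
    using \<open>T \<subseteq> X\<close> by auto
  moreover have "card (T \<union> (U - {t})) = card T + card (U - {t})"
    using \<open>U - {t} \<subset> X - T\<close> \<open>finite T\<close> \<open>finite U\<close> by (intro card_Un_disjoint) auto
  moreover have "card T \<ge> 1"
    using \<open>finite T\<close> \<open>t \<in> T\<close> by (auto simp: Suc_le_eq card_gt_0_iff)
  moreover have "T \<subset> T \<union> (U - {t})"
    using \<open>U - {t} \<noteq> {}\<close> \<open>U - {t} \<subset> X - T\<close> by blast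
  ultimately show ?thesis
    using True \<open>card (U - {t}) \<ge> 1\<close>
    by (simp add: uncollapse_def outer_vertices_def wh_vertices_on_def)
next
  case False
  have "U \<subseteq> X - T" and "2 \<le> card U"
    using U False by (auto simp: wh_vertices_on_def)
  moreover have "U \<subset> X"
    using \<open>U \<subseteq> X - T\<close> \<open>T \<subseteq> X\<close> \<open>t \<in> T\<close> by blast
  ultimately show ?thesis
    using False by (auto simp: uncollapse_def outer_vertices_def wh_vertices_on_def)
qed

lemma bij_betw_collapse:
  assumes "T \<subseteq> X" and "finite T" and "t \<in> T"
  shows "bij_betw (collapse T t) (outer_vertices X T) (wh_vertices_on (insert t (X - T)))"
proof (rule bij_betw_byWitness[where f' = "uncollapse T t"])
  show "collapse T t ` outer_vertices X T \<subseteq> wh_vertices_on (insert t (X - T))"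
    using collapse_mem_wh_vertices_on[OF assms(1,3)] by (rule image_subsetI)
  show "uncollapse T t ` wh_vertices_on (insert t (X - T)) \<subseteq> outer_vertices X T"
    using uncollapse_mem_outer_vertices[OF assms] by (rule image_subsetI)
qed (use assms in \<open>auto simp: collapse_def uncollapse_def outer_vertices_def wh_vertices_on_def\<close>)

lemma link_whitehouse_on_iso_join:
  assumes T: "T \<in> wh_vertices_on X" and "t \<in> T"
  shows "simplicial_iso (link (whitehouse_on X) {T})
           (join (whitehouse_on T) (whitehouse_on (insert t (X - T))))"
proof -
  have "T \<subset> X" and "finite T"
    using T wh_vertices_on_finite by (auto simp: wh_vertices_on_def)
  have link_eq: "link (whitehouse_on X) {T} = laminar_families (wh_vertices_on T \<union> outer_vertices X T)"
    unfolding whitehouse_on_def link_laminar_families[OF T] compatible_vertices_split(1)[OF T] ..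
  have "simplicial_iso (laminar_families (wh_vertices_on T \<union> outer_vertices X T))
      (join (whitehouse_on T) (laminar_families (outer_vertices X T)))"
    unfolding whitehouse_on_def using compatible_vertices_split(2,3)[OF T]
    by (rule laminar_families_Un_iso_join)
  moreover have "simplicial_iso (laminar_families (outer_vertices X T)) (whitehouse_on (insert t (X - T)))"
    unfolding whitehouse_on_def
  proof (rule simplicial_iso_laminar_families)
    show "bij_betw (collapse T t) (outer_vertices X T) (wh_vertices_on (insert t (X - T)))"
      using \<open>T \<subset> X\<close> \<open>finite T\<close> \<open>t \<in> T\<close> by (intro bij_betw_collapse) auto
    show "compatible (collapse T t S) (collapse T t S') \<longleftrightarrow> compatible S S'"
      if "S \<in> outer_vertices X T" and "S' \<in> outer_vertices X T" for S S'
      using that \<open>t \<in> T\<close> unfolding outer_vertices_def by (intro compatible_collapse_iff) auto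
  qed
  ultimately show ?thesis
    unfolding link_eq by (meson simplicial_iso_join simplicial_iso_refl simplicial_iso_trans)
qed

theorem mainTheorem2:
  fixes n :: nat and T :: "nat set"
  assumes "n \<ge> 4" and "T \<in> wh_vertices n"
  shows "simplicial_iso (link (whitehouse n) {T})
           (join (whitehouse (card T + 1)) (whitehouse (n - card T + 1)))"
proof -
  have T: "T \<in> wh_vertices_on {2..n}"
    using assms(2) by (simp add: wh_vertices_eq_wh_vertices_on)
  have "T \<subseteq> {2..n}" and "finite T" and "2 \<le> card T" and "card T \<le> n - 2"
    using assms(2) finite_subset by (auto simp: wh_vertices_def)
  then obtain t where "t \<in> T"
    by fastforce
  have "card (insert t ({2..n} - T)) = n - card T"
    using \<open>T \<subseteq> {2..n}\<close> \<open>finite T\<close> \<open>t \<in> T\<close> \<open>2 \<le> card T\<close> \<open>card T \<le> n - 2\<close>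
    by (simp add: card_Diff_subset)
  then have "simplicial_iso (whitehouse_on (insert t ({2..n} - T))) (whitehouse (n - card T + 1))"
    unfolding whitehouse_eq_whitehouse_on by (intro whitehouse_on_iso) simp_all
  moreover have "simplicial_iso (whitehouse_on T) (whitehouse (card T + 1))"
    unfolding whitehouse_eq_whitehouse_on using \<open>finite T\<close> by (intro whitehouse_on_iso) simp_all
  ultimately show ?thesis
    unfolding whitehouse_eq_whitehouse_on [of n]
    by (meson link_whitehouse_on_iso_join[OF T \<open>t \<in> T\<close>] simplicial_iso_join simplicial_iso_trans)
qed

end
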